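(* Let $f(p)$ be a real function with values in $[0,1]$. The tuple $(\sqrt{f(p)},\sqrt{1-f(p)})$ is simulable if and only if $\sqrt{\frac{f(p)}{1-f(p)}}$ belongs to the field generated by $\sqrt{\frac{p}{1-p}}$ and $\mathbb{R}$; equivalently, if and only if there exist polynomials $g_1,g_2,g_3,g_4$ in $p$ with real coefficients ($g_2,g_4\neq0$) such that $$\sqrt{\frac{f(p)}{1-f(p)}}=\frac{g_1(p)}{g_2(p)}\sqrt{\frac{p}{1-p}}+\frac{g_3(p)}{g_4(p)}.$$
   Context: Let $p\in[0,1]$ be an unknown parameter and let $|p\rangle=\sqrt{p}|0\rangle+\sqrt{1-p}|1\rangle$. For a complex function $h(p)$ write $|f_h\rangle=\frac{1}{\sqrt{1+|h(p)|^2}}(h(p)|0\rangle+|1\rangle)$. A tuple $(k_0(p),k_1(p))$ of complex functions with $|k_0|^2+|k_1|^2=1$ is called simulable if, starting from an unbounded supply of copies of $|p\rangle$, one can produce the single-qubit state $|f_{k_0/k_1}\rangle=k_0(p)|0\rangle+k_1(p)|1\rangle$ (up to a global phase) in finitely many steps with nonzero success probability, where each step applies a unitary transformation or a measurement (in the computational basis) to the current state together with auxiliary qubits; the operations may not depend on $p$. Auxiliary qubits may be other simulable states or constant states $|a_c\rangle=\frac{1}{\sqrt{|a|^2+1}}(a|0\rangle+|1\rangle)$ with $a\in\mathbb{C}$ a constant independent of $p$. *)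

theory Defs
  imports Complex_Main "HOL-Computational_Algebra.Polynomial"
begin

text \<open>An n-qubit (unnormalised) state vector is a function nat \<Rightarrow> complex supported on
  the indices below 2^n (computational basis, the last qubit is the least significant bit). Since every
  allowed operation is linear up to a p-dependent positive renormalisation, we track
  states up to a nonzero scalar (per p).\<close>

definition tensor_vec :: "nat \<Rightarrow> nat \<Rightarrow> (nat \<Rightarrow> complex) \<Rightarrow> (nat \<Rightarrow> complex) \<Rightarrow> nat \<Rightarrow> complex" where
  "tensor_vec n m v w = (\<lambda>i. if i < 2^(n+m) then v (i div 2^m) * w (i mod 2^m) else 0)"

definition unitary_mat :: "nat \<Rightarrow> (nat \<Rightarrow> nat \<Rightarrow> complex) \<Rightarrow> bool" where
  "unitary_mat n U \<longleftrightarrow> (\<forall>i<2^n. \<forall>j<2^n.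
      (\<Sum>k<2^n. cnj (U k i) * U k j) = (if i = j then 1 else 0))"

definition apply_mat :: "nat \<Rightarrow> (nat \<Rightarrow> nat \<Rightarrow> complex) \<Rightarrow> (nat \<Rightarrow> complex) \<Rightarrow> nat \<Rightarrow> complex" where
  "apply_mat n U v = (\<lambda>i. if i < 2^n then (\<Sum>j<2^n. U i j * v j) else 0)"

definition measure_last :: "nat \<Rightarrow> nat \<Rightarrow> (nat \<Rightarrow> complex) \<Rightarrow> nat \<Rightarrow> complex" where
  "measure_last n b v = (\<lambda>i. if i < 2^n then v (2 * i + b) else 0)"

inductive reachable :: "nat \<Rightarrow> (real \<Rightarrow> nat \<Rightarrow> complex) \<Rightarrow> bool" where
  copy: "reachable 1 (\<lambda>p i. if i = 0 then complex_of_real (sqrt p)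
                           else if i = 1 then complex_of_real (sqrt (1 - p)) else 0)"
| const: "reachable 1 (\<lambda>p i. if i = 0 then a else if i = 1 then 1 else 0)"
| tensor: "reachable n \<psi> \<Longrightarrow> reachable m \<phi> \<Longrightarrow>
           reachable (n + m) (\<lambda>p. tensor_vec n m (\<psi> p) (\<phi> p))"
| unitary: "reachable n \<psi> \<Longrightarrow> unitary_mat n U \<Longrightarrow>
           reachable n (\<lambda>p. apply_mat n U (\<psi> p))"
| measure: "reachable (Suc n) \<psi> \<Longrightarrow> b \<in> {0, 1} \<Longrightarrow>
           (\<exists>p\<in>{0<..<1}. \<exists>i<2^n. \<psi> p (2 * i + b) \<noteq> 0) \<Longrightarrow>
           reachable n (\<lambda>p. measure_last n b (\<psi> p))"

definition simulable :: "(real \<Rightarrow> complex) \<Rightarrow> (real \<Rightarrow> complex) \<Rightarrow> bool" where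
  "simulable k0 k1 \<longleftrightarrow>
     (\<forall>p\<in>{0<..<1}. (cmod (k0 p))^2 + (cmod (k1 p))^2 = 1) \<and>
     (\<exists>\<psi>. reachable 1 \<psi> \<and>
        (\<forall>p\<in>{0<..<1}. (\<psi> p 0 \<noteq> 0 \<or> \<psi> p 1 \<noteq> 0) \<longrightarrow>
            (\<exists>c. c \<noteq> 0 \<and> \<psi> p 0 = c * k0 p \<and> \<psi> p 1 = c * k1 p)))"

end

theory Submission
  imports Defs
begin

(* The u with (u, 1) preparable are closed under products and sums (a
   permutation gate, resp. a Hadamard-type gate, on two such qubits followed by post-selecting
   the last qubit on 0), and they contain s = sqrt (p / (1 - p)) (a copy of |p>) and hence
   p = 1 - 1 / (1 + s^2); so every function in R(p)(s) is the amplitude ratio of a reachable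
   state. Conversely, all operations are linear, so every reachable amplitude is
   sqrt (1 - p) ^ N times a polynomial in s. The ratio sqrt (f / (1 - f)) is then A(s) / B(s)
   for real polynomials A, B, and multiplying by B(-s) and using s^2 = p / (1 - p) brings it
   into the form g1(p) / G(p) * s + g3(p) / G(p). *)

definition preparable :: "(real \<Rightarrow> complex) \<Rightarrow> (real \<Rightarrow> complex) \<Rightarrow> bool" where
  "preparable u v \<longleftrightarrow> (\<exists>\<psi> \<mu>. reachable 1 \<psi> \<and>
     (\<forall>p\<in>{0<..<1}. \<mu> p \<noteq> 0 \<and> \<psi> p 0 = \<mu> p * u p \<and> \<psi> p 1 = \<mu> p * v p))"

abbreviation preparable_ratio :: "(real \<Rightarrow> complex) \<Rightarrow> bool" where
  "preparable_ratio u \<equiv> preparable u (\<lambda>_. 1)"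

definition swap_gate :: "nat \<Rightarrow> nat \<Rightarrow> complex" where
  "swap_gate i j = (if (i, j) \<in> {(0, 1), (1, 0)} then 1 else 0)"

definition product_gate :: "nat \<Rightarrow> nat \<Rightarrow> complex" where
  "product_gate i j = (if (i, j) \<in> {(0, 0), (1, 1), (2, 3), (3, 2)} then 1 else 0)"

definition sum_gate :: "nat \<Rightarrow> nat \<Rightarrow> complex" where
  "sum_gate i j =
     (let h = complex_of_real (1 / sqrt 2) in
      if i = 0 then (if j = 1 \<or> j = 2 then h else 0)
      else if i = 1 then (if j = 1 then h else if j = 2 then - h else 0)
      else if (i, j) \<in> {(2, 3), (3, 0)} then 1 else 0)"

lemma sum_lessThan_4: "(\<Sum>i<4::nat. f i) = f 0 + f 1 + f 2 + f 3"
  by (simp add: eval_nat_numeral)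

lemma all_less_4: "(\<forall>i<4::nat. P i) \<longleftrightarrow> P 0 \<and> P 1 \<and> P 2 \<and> P 3"
  by (auto simp: less_Suc_eq numeral_eq_Suc)

lemma unitary_swap_gate: "unitary_mat 1 swap_gate"
  by (simp add: unitary_mat_def swap_gate_def eval_nat_numeral less_Suc_eq)

lemma unitary_product_gate: "unitary_mat 2 product_gate"
  by (simp add: unitary_mat_def product_gate_def eval_nat_numeral all_less_4)

lemma unitary_sum_gate: "unitary_mat 2 sum_gate"
  by (simp add: unitary_mat_def sum_gate_def Let_def eval_nat_numeral all_less_4 flip: of_real_mult)

lemma preparable_cong:
  "preparable u v \<Longrightarrow> (\<And>p. p \<in> {0<..<1} \<Longrightarrow> u p = u' p \<and> v p = v' p) \<Longrightarrow> preparable u' v'"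
  unfolding preparable_def by metis

lemma preparable_sqrt: "preparable (\<lambda>p. complex_of_real (sqrt p)) (\<lambda>p. complex_of_real (sqrt (1 - p)))"
  unfolding preparable_def
  by (rule exI, rule exI[of _ "\<lambda>_. 1"], rule conjI[OF reachable.copy]) simp

lemma preparable_const: "preparable_ratio (\<lambda>_. a)"
  unfolding preparable_def
  by (rule exI, rule exI[of _ "\<lambda>_. 1"], rule conjI[OF reachable.const[of a]]) simp

lemma preparable_swap:
  assumes "preparable u v"
  shows "preparable v u"
proof -
  from assms obtain \<psi> \<mu> where "reachable 1 \<psi>"
    and h: "\<forall>p\<in>{0<..<1}. \<mu> p \<noteq> 0 \<and> \<psi> p 0 = \<mu> p * u p \<and> \<psi> p 1 = \<mu> p * v p"
    unfolding preparable_def by blast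
  then have "reachable 1 (\<lambda>p. apply_mat 1 swap_gate (\<psi> p))"
    by (intro reachable.unitary unitary_swap_gate)
  moreover have "\<forall>p\<in>{0<..<1}. \<mu> p \<noteq> 0 \<and> apply_mat 1 swap_gate (\<psi> p) 0 = \<mu> p * v p
      \<and> apply_mat 1 swap_gate (\<psi> p) 1 = \<mu> p * u p"
    using h by (simp add: apply_mat_def swap_gate_def eval_nat_numeral)
  ultimately show ?thesis
    unfolding preparable_def by blast
qed

(* Post-selecting the last qubit on 0 keeps rows 0 and 2 of U; row 2 routes v1 v2 to amplitude 1. *)
lemma preparable_two_qubit_gate:
  assumes "preparable u1 v1" "preparable u2 v2"
    and U: "unitary_mat 2 U" "\<forall>j<4. U 2 j = (if j = 3 then 1 else 0)"
    and nz: "\<exists>p\<in>{0<..<1}. v1 p * v2 p \<noteq> 0"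
  shows "preparable
    (\<lambda>p. U 0 0 * (u1 p * u2 p) + U 0 1 * (u1 p * v2 p) + U 0 2 * (v1 p * u2 p) + U 0 3 * (v1 p * v2 p))
    (\<lambda>p. v1 p * v2 p)"
proof -
  from assms obtain \<psi> \<mu> where r1: "reachable 1 \<psi>"
    and h1: "\<forall>p\<in>{0<..<1}. \<mu> p \<noteq> 0 \<and> \<psi> p 0 = \<mu> p * u1 p \<and> \<psi> p 1 = \<mu> p * v1 p"
    unfolding preparable_def by blast
  from assms obtain \<phi> \<nu> where r2: "reachable 1 \<phi>"
    and h2: "\<forall>p\<in>{0<..<1}. \<nu> p \<noteq> 0 \<and> \<phi> p 0 = \<nu> p * u2 p \<and> \<phi> p 1 = \<nu> p * v2 p"
    unfolding preparable_def by blast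
  define \<chi> where "\<chi> p = apply_mat 2 U (tensor_vec 1 1 (\<psi> p) (\<phi> p))" for p
  have \<chi>0: "\<chi> p 0 = U 0 0 * (\<psi> p 0 * \<phi> p 0) + U 0 1 * (\<psi> p 0 * \<phi> p 1)
      + U 0 2 * (\<psi> p 1 * \<phi> p 0) + U 0 3 * (\<psi> p 1 * \<phi> p 1)" for p
    by (simp add: \<chi>_def apply_mat_def tensor_vec_def sum_lessThan_4)
  have \<chi>2: "\<chi> p 2 = \<psi> p 1 * \<phi> p 1" for p
    using U(2) by (simp add: \<chi>_def apply_mat_def tensor_vec_def sum_lessThan_4 all_less_4)
  have "reachable (1 + 1) (\<lambda>p. apply_mat (1 + 1) U (tensor_vec 1 1 (\<psi> p) (\<phi> p)))"
    using U(1) by (intro reachable.unitary reachable.tensor r1 r2) (simp add: numeral_2_eq_2)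
  then have "reachable (Suc 1) \<chi>"
    unfolding \<chi>_def Suc_1 one_add_one .
  moreover have "\<exists>p\<in>{0<..<1}. \<exists>i<2 ^ 1. \<chi> p (2 * i + 0) \<noteq> 0"
  proof -
    from nz obtain p where p: "p \<in> {0<..<1}" "v1 p * v2 p \<noteq> 0" by blast
    then have "\<chi> p (2 * 1 + 0) \<noteq> 0"
      using h1 h2 by (simp add: \<chi>2)
    then show ?thesis
      using p(1) by (intro bexI[of _ p] exI[of _ 1]) auto
  qed
  ultimately have "reachable 1 (\<lambda>p. measure_last 1 0 (\<chi> p))"
    by (simp add: reachable.measure)
  moreover have "\<forall>p\<in>{0<..<1}. \<mu> p * \<nu> p \<noteq> 0
      \<and> measure_last 1 0 (\<chi> p) 0 = \<mu> p * \<nu> p * (U 0 0 * (u1 p * u2 p) + U 0 1 * (u1 p * v2 p)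
          + U 0 2 * (v1 p * u2 p) + U 0 3 * (v1 p * v2 p))
      \<and> measure_last 1 0 (\<chi> p) 1 = \<mu> p * \<nu> p * (v1 p * v2 p)"
  proof -
    have "measure_last 1 0 w 0 = w 0" "measure_last 1 0 w 1 = w 2" for w
      by (simp_all add: measure_last_def)
    then show ?thesis
      using h1 h2 by (simp add: \<chi>0 \<chi>2 algebra_simps)
  qed
  ultimately show ?thesis
    unfolding preparable_def
    by (intro exI[of _ "\<lambda>p. measure_last 1 0 (\<chi> p)"] exI[of _ "\<lambda>p. \<mu> p * \<nu> p"]) blast
qed

lemma preparable_mult:
  assumes "preparable u1 v1" "preparable u2 v2" "\<exists>p\<in>{0<..<1}. v1 p * v2 p \<noteq> 0"
  shows "preparable (\<lambda>p. u1 p * u2 p) (\<lambda>p. v1 p * v2 p)"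
  using preparable_two_qubit_gate[OF assms(1,2) unitary_product_gate _ assms(3)]
  by (simp add: product_gate_def all_less_4)

lemma preparable_add:
  assumes "preparable u1 v1" "preparable u2 v2" "\<exists>p\<in>{0<..<1}. v1 p * v2 p \<noteq> 0"
  shows "preparable (\<lambda>p. (u1 p * v2 p + v1 p * u2 p) / sqrt 2) (\<lambda>p. v1 p * v2 p)"
  using preparable_two_qubit_gate[OF assms(1,2) unitary_sum_gate _ assms(3)]
  by (simp add: sum_gate_def all_less_4 Let_def algebra_simps add_divide_distrib)

lemma preparable_ratio_mult:
  "preparable_ratio u \<Longrightarrow> preparable_ratio w \<Longrightarrow> preparable_ratio (\<lambda>p. u p * w p)"
  using preparable_mult[of u "\<lambda>_. 1" w "\<lambda>_. 1"] dense[of 0 "1::real"] by simp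

lemma preparable_ratio_add:
  assumes "preparable_ratio u" "preparable_ratio w"
  shows "preparable_ratio (\<lambda>p. u p + w p)"
proof -
  have "preparable_ratio (\<lambda>p. (u p + w p) / sqrt 2)"
    using preparable_add[OF assms] dense[of 0 "1::real"] by simp
  then have "preparable_ratio (\<lambda>p. (u p + w p) / sqrt 2 * sqrt 2)"
    by (rule preparable_ratio_mult[OF _ preparable_const])
  then show ?thesis
    by (simp flip: of_real_mult)
qed

lemma preparable_ratio_divide:
  assumes "preparable u v" "\<forall>p\<in>{0<..<1}. v p \<noteq> 0"
  shows "preparable_ratio (\<lambda>p. u p / v p)"
proof -
  from assms obtain \<psi> \<mu> where "reachable 1 \<psi>"
    and h: "\<forall>p\<in>{0<..<1}. \<mu> p \<noteq> 0 \<and> \<psi> p 0 = \<mu> p * u p \<and> \<psi> p 1 = \<mu> p * v p"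
    unfolding preparable_def by blast
  moreover have "\<forall>p\<in>{0<..<1}. \<mu> p * v p \<noteq> 0
      \<and> \<psi> p 0 = \<mu> p * v p * (u p / v p) \<and> \<psi> p 1 = \<mu> p * v p * 1"
    using h assms(2) by auto
  ultimately show ?thesis
    unfolding preparable_def by (intro exI[of _ \<psi>] exI[of _ "\<lambda>p. \<mu> p * v p"]) blast
qed

lemma preparable_ratio_sqrt_odds: "preparable_ratio (\<lambda>p. complex_of_real (sqrt (p / (1 - p))))"
proof -
  have "preparable_ratio (\<lambda>p. complex_of_real (sqrt p) / complex_of_real (sqrt (1 - p)))"
    by (rule preparable_ratio_divide[OF preparable_sqrt]) auto
  then show ?thesis
    by (rule preparable_cong) (simp add: real_sqrt_divide)
qed

lemma preparable_ratio_of_real: "preparable_ratio (\<lambda>p. complex_of_real p)"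
proof -
  let ?s = "\<lambda>p. complex_of_real (sqrt (p / (1 - p)))"
  have "preparable_ratio (\<lambda>p. 1 + ?s p * ?s p)"
    by (intro preparable_ratio_add preparable_ratio_mult preparable_const preparable_ratio_sqrt_odds)
  then have "preparable (\<lambda>p. complex_of_real (1 / (1 - p))) (\<lambda>_. 1)"
    by (rule preparable_cong) (simp add: field_simps flip: of_real_mult)
  then have "preparable_ratio (\<lambda>p. 1 / complex_of_real (1 / (1 - p)))"
    by (rule preparable_ratio_divide[OF preparable_swap]) auto
  then have "preparable_ratio (\<lambda>p. 1 + (- 1) * (1 / complex_of_real (1 / (1 - p))))"
    by (intro preparable_ratio_add preparable_ratio_mult preparable_const)
  then show ?thesis
    by (rule preparable_cong) (auto simp: field_simps)
qed

lemma preparable_ratio_poly: "preparable_ratio (\<lambda>p. complex_of_real (poly A p))"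
proof (induction A)
  case 0
  show ?case
    using preparable_const[of 0] by simp
next
  case (pCons a A)
  have "preparable_ratio (\<lambda>p. complex_of_real a + complex_of_real p * complex_of_real (poly A p))"
    by (intro preparable_ratio_add preparable_ratio_mult preparable_const preparable_ratio_of_real pCons.IH)
  then show ?case
    by simp
qed

lemma preparable_of_ratios:
  assumes "preparable_ratio u" "preparable_ratio v" "\<exists>p\<in>{0<..<1}. v p \<noteq> 0"
  shows "preparable u v"
  using preparable_mult[OF assms(1) preparable_swap[OF assms(2)]] assms(3) by simp

lemma simulable_if_preparable:
  assumes "preparable u v"
    and norm: "\<forall>p\<in>{0<..<1}. (cmod (k0 p))\<^sup>2 + (cmod (k1 p))\<^sup>2 = 1"
    and proportional: "\<forall>p\<in>{0<..<1}. u p \<noteq> 0 \<or> v p \<noteq> 0 \<longrightarrow>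
      k1 p \<noteq> 0 \<and> u p * k1 p = v p * k0 p"
  shows "simulable k0 k1"
proof -
  from assms(1) obtain \<psi> \<mu> where "reachable 1 \<psi>"
    and h: "\<forall>p\<in>{0<..<1}. \<mu> p \<noteq> 0 \<and> \<psi> p 0 = \<mu> p * u p \<and> \<psi> p 1 = \<mu> p * v p"
    unfolding preparable_def by blast
  moreover have "\<exists>c. c \<noteq> 0 \<and> \<psi> p 0 = c * k0 p \<and> \<psi> p 1 = c * k1 p"
    if p: "p \<in> {0<..<1}" and nz: "\<psi> p 0 \<noteq> 0 \<or> \<psi> p 1 \<noteq> 0" for p
  proof -
    have "u p \<noteq> 0 \<or> v p \<noteq> 0"
      using nz h p by auto
    then have "k1 p \<noteq> 0" "u p * k1 p = v p * k0 p" "v p \<noteq> 0"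
      using proportional p by auto
    then show ?thesis
      using h p by (intro exI[of _ "\<mu> p * v p / k1 p"]) (auto simp: field_simps)
  qed
  ultimately show ?thesis
    unfolding simulable_def using norm by blast
qed

lemma ex_unit_interval_poly_nonzero:
  fixes q :: "real poly"
  assumes "q \<noteq> 0"
  shows "\<exists>p\<in>{0<..<1}. poly q p \<noteq> 0"
proof -
  have "\<not> {0<..<1::real} \<subseteq> {x. poly q x = 0}"
    using poly_roots_finite[OF assms] finite_subset by (metis infinite_Ioo zero_less_one)
  then show ?thesis
    by blast
qed

lemma simulable_if_rational_in_sqrt_odds:
  fixes f :: "real \<Rightarrow> real"
  assumes f_range: "\<forall>p\<in>{0<..<1}. 0 \<le> f p \<and> f p < 1"
    and "g2 \<noteq> 0" "g4 \<noteq> 0"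
    and eq: "\<forall>p\<in>{0<..<1}. poly g2 p \<noteq> 0 \<and> poly g4 p \<noteq> 0 \<longrightarrow>
      sqrt (f p / (1 - f p)) = poly g1 p / poly g2 p * sqrt (p / (1 - p)) + poly g3 p / poly g4 p"
  shows "simulable (\<lambda>p. complex_of_real (sqrt (f p))) (\<lambda>p. complex_of_real (sqrt (1 - f p)))"
proof -
  define G where "G p = poly g2 p * poly g4 p" for p
  define U where "U p = G p * (poly g1 p * poly g4 p * sqrt (p / (1 - p)) + poly g3 p * poly g2 p)" for p
  define V where "V p = G p * G p" for p
  have ratios: "preparable_ratio (\<lambda>p. complex_of_real (U p))"
    "preparable_ratio (\<lambda>p. complex_of_real (V p))"
    unfolding U_def V_def G_def of_real_mult of_real_add
    by (intro preparable_ratio_mult preparable_ratio_add preparable_ratio_poly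
        preparable_ratio_sqrt_odds)+
  obtain p0 where p0: "p0 \<in> {0<..<1}" "G p0 \<noteq> 0"
    using ex_unit_interval_poly_nonzero[of "g2 * g4"] assms(2,3) unfolding G_def by auto
  have UV: "preparable (\<lambda>p. complex_of_real (U p)) (\<lambda>p. complex_of_real (V p))"
    by (rule preparable_of_ratios[OF ratios]) (use p0 in \<open>auto simp: V_def\<close>)
  have proportional: "complex_of_real (sqrt (1 - f p)) \<noteq> 0 \<and>
      complex_of_real (U p) * complex_of_real (sqrt (1 - f p))
        = complex_of_real (V p) * complex_of_real (sqrt (f p))"
    if p: "p \<in> {0<..<1}" and "complex_of_real (U p) \<noteq> 0 \<or> complex_of_real (V p) \<noteq> 0" for p
  proof -
    have "G p \<noteq> 0"
      using that by (auto simp: U_def V_def)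
    then have "poly g2 p \<noteq> 0" "poly g4 p \<noteq> 0"
      by (auto simp: G_def)
    then have "sqrt (f p / (1 - f p)) = poly g1 p / poly g2 p * sqrt (p / (1 - p)) + poly g3 p / poly g4 p"
      using eq p by blast
    also have "\<dots> = U p / V p"
      using \<open>poly g2 p \<noteq> 0\<close> \<open>poly g4 p \<noteq> 0\<close> by (simp add: U_def V_def G_def field_simps)
    finally have ratio: "sqrt (f p / (1 - f p)) = U p / V p" .
    have "0 \<le> f p" "f p < 1"
      using f_range p by auto
    then have "sqrt (1 - f p) \<noteq> 0" "sqrt (f p) = sqrt (f p / (1 - f p)) * sqrt (1 - f p)"
      by (simp_all add: real_sqrt_divide)
    then have "U p * sqrt (1 - f p) = V p * sqrt (f p)"
      using \<open>G p \<noteq> 0\<close> by (simp add: ratio V_def)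
    then show ?thesis
      using \<open>sqrt (1 - f p) \<noteq> 0\<close> by (simp flip: of_real_mult)
  qed
  show ?thesis
  proof (rule simulable_if_preparable[OF UV])
    show "\<forall>p\<in>{0<..<1}.
        (cmod (complex_of_real (sqrt (f p))))\<^sup>2 + (cmod (complex_of_real (sqrt (1 - f p))))\<^sup>2 = 1"
      using f_range by force
  qed (use proportional in blast)
qed

definition poly_amplitudes :: "nat \<Rightarrow> (nat \<Rightarrow> complex poly) \<Rightarrow> (real \<Rightarrow> nat \<Rightarrow> complex) \<Rightarrow> bool" where
  "poly_amplitudes N P \<psi> \<longleftrightarrow> (\<forall>p\<in>{0<..<1}. \<forall>i.
     \<psi> p i = complex_of_real (sqrt (1 - p) ^ N) * poly (P i) (complex_of_real (sqrt (p / (1 - p)))))"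

lemma poly_amplitudes_tensor:
  assumes "poly_amplitudes N1 P1 \<psi>" "poly_amplitudes N2 P2 \<phi>"
  shows "poly_amplitudes (N1 + N2) (\<lambda>i. if i < 2 ^ (n + m) then P1 (i div 2 ^ m) * P2 (i mod 2 ^ m) else 0)
    (\<lambda>p. tensor_vec n m (\<psi> p) (\<phi> p))"
  using assms by (simp add: poly_amplitudes_def tensor_vec_def power_add)

lemma poly_amplitudes_apply_mat:
  assumes "poly_amplitudes N P \<psi>"
  shows "poly_amplitudes N (\<lambda>i. if i < 2 ^ n then \<Sum>j<2 ^ n. smult (U i j) (P j) else 0)
    (\<lambda>p. apply_mat n U (\<psi> p))"
  using assms by (simp add: poly_amplitudes_def apply_mat_def poly_sum sum_distrib_left mult.left_commute)

lemma poly_amplitudes_measure_last: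
  assumes "poly_amplitudes N P \<psi>"
  shows "poly_amplitudes N (\<lambda>i. if i < 2 ^ n then P (2 * i + b) else 0) (\<lambda>p. measure_last n b (\<psi> p))"
  using assms by (simp add: poly_amplitudes_def measure_last_def)

lemma smult_sum_right: "smult c (\<Sum>j\<in>A. f j) = (\<Sum>j\<in>A. smult c (f j))"
  by (induction A rule: infinite_finite_induct) (simp_all add: smult_add_right)

lemma unitary_mat_left_inverse:
  assumes U: "unitary_mat n U" and i: "i < 2 ^ n"
  shows "(\<Sum>k<2 ^ n. smult (cnj (U k i)) (\<Sum>j<2 ^ n. smult (U k j) (P j))) = (P i :: complex poly)"
proof -
  have "(\<Sum>k<2 ^ n. smult (cnj (U k i)) (\<Sum>j<2 ^ n. smult (U k j) (P j)))
      = (\<Sum>k<2 ^ n. \<Sum>j<2 ^ n. smult (cnj (U k i) * U k j) (P j))"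
    by (simp add: smult_sum_right)
  also have "\<dots> = (\<Sum>j<2 ^ n. \<Sum>k<2 ^ n. smult (cnj (U k i) * U k j) (P j))"
    by (rule sum.swap)
  also have "\<dots> = (\<Sum>j<2 ^ n. smult (\<Sum>k<2 ^ n. cnj (U k i) * U k j) (P j))"
    by (simp add: smult_sum)
  also have "\<dots> = (\<Sum>j<2 ^ n. if i = j then P j else 0)"
    using U i unfolding unitary_mat_def by (intro sum.cong) auto
  also have "\<dots> = P i"
    using i by simp
  finally show ?thesis .
qed

lemma unitary_mat_apply_nonzero:
  assumes "unitary_mat n U" "i < 2 ^ n" "P i \<noteq> (0 :: complex poly)"
  shows "\<exists>k<2 ^ n. (\<Sum>j<2 ^ n. smult (U k j) (P j)) \<noteq> 0"
proof (rule ccontr)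
  assume "\<not> ?thesis"
  then have "P i = 0"
    using unitary_mat_left_inverse[OF assms(1,2), of P] by simp
  with assms(3) show False ..
qed

lemma tensor_index_less:
  fixes a b n m :: nat
  assumes "a < 2 ^ n" "b < 2 ^ m"
  shows "a * 2 ^ m + b < 2 ^ (n + m)"
proof -
  have "a * 2 ^ m + b < 2 ^ m * (a + 1)"
    using assms by simp
  also have "\<dots> \<le> 2 ^ m * 2 ^ n"
    using assms(1) by (intro mult_le_mono2) simp
  finally show ?thesis
    by (simp add: power_add mult.commute)
qed

lemma reachable_poly_amplitudes:
  "reachable n \<psi> \<Longrightarrow> \<exists>N P. poly_amplitudes N P \<psi> \<and> (\<exists>i<2 ^ n. P i \<noteq> 0)"
proof (induction rule: reachable.induct)
  case copy
  define P :: "nat \<Rightarrow> complex poly" where "P i = (if i = 0 then [:0, 1:] else if i = 1 then 1 else 0)" for i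
  have "poly_amplitudes 1 P
    (\<lambda>p i. if i = 0 then complex_of_real (sqrt p) else if i = 1 then complex_of_real (sqrt (1 - p)) else 0)"
    unfolding poly_amplitudes_def
  proof (intro ballI allI)
    fix p :: real and i :: nat
    assume "p \<in> {0<..<1}"
    then have "sqrt p = sqrt (1 - p) * sqrt (p / (1 - p))"
      by (simp add: real_sqrt_divide)
    then show "(if i = 0 then complex_of_real (sqrt p) else if i = 1 then complex_of_real (sqrt (1 - p)) else 0)
      = complex_of_real (sqrt (1 - p) ^ 1) * poly (P i) (complex_of_real (sqrt (p / (1 - p))))"
      by (simp add: P_def flip: of_real_mult)
  qed
  moreover have "P 1 \<noteq> 0"
    by (simp add: P_def)
  ultimately show ?case
    by force
next
  case (const a)
  define P :: "nat \<Rightarrow> complex poly" where "P i = (if i = 0 then [:a:] else if i = 1 then 1 else 0)" for i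
  have "poly_amplitudes 0 P (\<lambda>p i. if i = 0 then a else if i = 1 then 1 else 0)"
    by (simp add: poly_amplitudes_def P_def)
  moreover have "P 1 \<noteq> 0"
    by (simp add: P_def)
  ultimately show ?case
    by force
next
  case (tensor n \<psi> m \<phi>)
  then obtain N1 P1 N2 P2 a b where amp: "poly_amplitudes N1 P1 \<psi>" "poly_amplitudes N2 P2 \<phi>"
    and ab: "a < 2 ^ n" "P1 a \<noteq> 0" "b < 2 ^ m" "P2 b \<noteq> 0"
    by blast
  define P where "P i = (if i < 2 ^ (n + m) then P1 (i div 2 ^ m) * P2 (i mod 2 ^ m) else 0)" for i
  have index: "a * 2 ^ m + b < 2 ^ (n + m)"
    using ab(1,3) by (rule tensor_index_less)
  have "poly_amplitudes (N1 + N2) P (\<lambda>p. tensor_vec n m (\<psi> p) (\<phi> p))"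
    unfolding P_def by (rule poly_amplitudes_tensor[OF amp])
  moreover have "P (a * 2 ^ m + b) \<noteq> 0"
    using index ab by (simp add: P_def)
  ultimately show ?case
    using index by blast
next
  case (unitary n \<psi> U)
  then obtain N P i where amp: "poly_amplitudes N P \<psi>" and i: "i < 2 ^ n" "P i \<noteq> 0"
    by blast
  define P' where "P' k = (if k < 2 ^ n then \<Sum>j<2 ^ n. smult (U k j) (P j) else 0)" for k
  have "\<exists>k<2 ^ n. P' k \<noteq> 0"
    using unitary_mat_apply_nonzero[of n U i P] unitary.hyps(2) i by (auto simp: P'_def)
  moreover have "poly_amplitudes N P' (\<lambda>p. apply_mat n U (\<psi> p))"
    unfolding P'_def by (rule poly_amplitudes_apply_mat[OF amp])
  ultimately show ?case
    by blast
next
  case (measure n \<psi> b)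
  then obtain N P where amp: "poly_amplitudes N P \<psi>"
    by blast
  define P' where "P' i = (if i < 2 ^ n then P (2 * i + b) else 0)" for i
  from measure.hyps(3) obtain p i where "p \<in> {0<..<1}" "i < 2 ^ n" "\<psi> p (2 * i + b) \<noteq> 0"
    by blast
  then have "i < 2 ^ n" "P' i \<noteq> 0"
    using amp by (auto simp: poly_amplitudes_def P'_def)
  moreover have "poly_amplitudes N P' (\<lambda>p. measure_last n b (\<psi> p))"
    unfolding P'_def by (rule poly_amplitudes_measure_last[OF amp])
  ultimately show ?case
    by blast
qed

lemma ex_sqrt_odds_avoiding:
  fixes S :: "real set"
  assumes "finite S"
  shows "\<exists>p\<in>{0<..<1}. sqrt (p / (1 - p)) \<notin> S \<and> - sqrt (p / (1 - p)) \<notin> S"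
proof -
  have "infinite ({0<..} - (S \<union> uminus ` S))"
    using assms infinite_Ioi by (metis Diff_infinite_finite finite_Un finite_imageI)
  then obtain t where "t \<in> {0<..} - (S \<union> uminus ` S)"
    using infinite_imp_nonempty by blast
  then have t: "t > 0" "t \<notin> S" "- t \<notin> S"
    by (auto simp: image_iff)
  define p where "p = t\<^sup>2 / (1 + t\<^sup>2)"
  have "1 + t\<^sup>2 > 0"
    by (simp add: add_pos_nonneg)
  then have "p \<in> {0<..<1}" "p / (1 - p) = t\<^sup>2"
    using t(1) by (simp_all add: p_def field_simps)
  then show ?thesis
    using t by (intro bexI[of _ p]) auto
qed

lemma ex_sqrt_odds_poly_nonzero:
  fixes P :: "complex poly"
  assumes "P \<noteq> 0"
  shows "\<exists>p\<in>{0<..<1}. poly P (complex_of_real (sqrt (p / (1 - p)))) \<noteq> 0"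
proof -
  have "finite (complex_of_real -` {z. poly P z = 0})"
    using poly_roots_finite[OF assms] by (rule finite_vimageI) (simp add: inj_on_def)
  then show ?thesis
    by (auto dest: ex_sqrt_odds_avoiding)
qed

lemma poly_sqrt_odds_split:
  fixes F :: "real poly"
  shows "\<exists>n Ev Od. \<forall>p x. 0 < p \<longrightarrow> p < 1 \<longrightarrow> x\<^sup>2 = p / (1 - p) \<longrightarrow>
    (1 - p) ^ n * poly F x = poly Ev p + x * poly Od p"
proof (induction F)
  case 0
  show ?case
    by (intro exI[of _ 0]) auto
next
  case (pCons a F)
  then obtain n Ev Od where IH: "\<And>p x. 0 < p \<Longrightarrow> p < 1 \<Longrightarrow> x\<^sup>2 = p / (1 - p) \<Longrightarrow>
      (1 - p) ^ n * poly F x = poly Ev p + x * poly Od p"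
    by blast
  have "(1 - p) ^ Suc n * poly (pCons a F) x
      = poly (smult a ([:1, -1:] ^ Suc n) + [:0, 1:] * Od) p + x * poly ([:1, -1:] * Ev) p"
    if "0 < p" "p < 1" "x\<^sup>2 = p / (1 - p)" for p x
  proof -
    have "(1 - p) ^ Suc n * poly (pCons a F) x = a * (1 - p) ^ Suc n + x * (1 - p) * ((1 - p) ^ n * poly F x)"
      by (simp add: algebra_simps)
    also have "\<dots> = a * (1 - p) ^ Suc n + x * x * (1 - p) * poly Od p + x * ((1 - p) * poly Ev p)"
      unfolding IH[OF that] by (simp add: algebra_simps)
    also have "x * x * (1 - p) = p"
      using that by (simp add: power2_eq_square)
    finally show ?thesis
      by (simp add: poly_power algebra_simps)
  qed
  then show ?case
    by blast
qed

lemma times_sqrt_conjugate: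
  fixes p s a b c d :: real
  assumes "s * s * (1 - p) = p"
  shows "(1 - p) * ((a + s * b) * (c - s * d)) = (1 - p) * a * c - p * b * d + (1 - p) * (b * c - a * d) * s"
proof -
  have "p * b * d = s * s * (1 - p) * b * d"
    by (simp add: assms)
  then show ?thesis
    by (simp add: algebra_simps)
qed

lemma sqrt_odds_ratio_rationalise:
  fixes A B :: "real poly"
  assumes "B \<noteq> 0"
  shows "\<exists>g1 g3 G. G \<noteq> 0 \<and> (\<forall>p\<in>{0<..<1}. poly G p \<noteq> 0 \<longrightarrow>
    poly B (sqrt (p / (1 - p))) \<noteq> 0 \<and>
    poly A (sqrt (p / (1 - p))) / poly B (sqrt (p / (1 - p)))
      = poly g1 p / poly G p * sqrt (p / (1 - p)) + poly g3 p / poly G p)"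
proof -
  obtain nA EA OA where A: "\<And>p x. 0 < p \<Longrightarrow> p < 1 \<Longrightarrow> x\<^sup>2 = p / (1 - p) \<Longrightarrow>
      (1 - p) ^ nA * poly A x = poly EA p + x * poly OA p"
    using poly_sqrt_odds_split[of A] by blast
  obtain nB EB OB where B: "\<And>p x. 0 < p \<Longrightarrow> p < 1 \<Longrightarrow> x\<^sup>2 = p / (1 - p) \<Longrightarrow>
      (1 - p) ^ nB * poly B x = poly EB p + x * poly OB p"
    using poly_sqrt_odds_split[of B] by blast
  define Q X :: "real poly" where "Q = [:1, -1:]" and "X = [:0, 1:]"
  define G where "G = Q ^ nA * (Q * EB * EB - X * OB * OB)"
  define g1 where "g1 = Q ^ Suc nB * (OA * EB - EA * OB)"
  define g3 where "g3 = Q ^ nB * (Q * EA * EB - X * OA * OB)"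
  have conj: "poly G p = (1 - p) ^ Suc nA * ((1 - p) ^ nB * poly B s) * ((1 - p) ^ nB * poly B (- s))"
    and num: "poly g1 p * s + poly g3 p
      = (1 - p) ^ Suc nB * ((1 - p) ^ nA * poly A s) * ((1 - p) ^ nB * poly B (- s))"
    if "p \<in> {0<..<1}" and s: "s = sqrt (p / (1 - p))" for p s
  proof -
    have p: "0 < p" "p < 1"
      using that by auto
    have s2: "s\<^sup>2 = p / (1 - p)" "(- s)\<^sup>2 = p / (1 - p)"
      using p by (simp_all add: s)
    have ss: "s * s * (1 - p) = p"
      using p by (simp add: s power2_eq_square[symmetric])
    note AB = A[OF p s2(1)] B[OF p s2(1)] B[OF p s2(2)]
    have "poly G p = (1 - p) ^ nA * ((1 - p) * poly EB p * poly EB p - p * poly OB p * poly OB p)"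
      by (simp add: G_def Q_def X_def poly_power algebra_simps)
    also have "\<dots> = (1 - p) ^ nA * ((1 - p) * ((poly EB p + s * poly OB p) * (poly EB p - s * poly OB p)))"
      by (simp add: times_sqrt_conjugate[OF ss])
    finally show "poly G p = (1 - p) ^ Suc nA * ((1 - p) ^ nB * poly B s) * ((1 - p) ^ nB * poly B (- s))"
      by (simp add: AB)
    have "poly g1 p * s + poly g3 p = (1 - p) ^ nB *
        ((1 - p) * poly EA p * poly EB p - p * poly OA p * poly OB p
          + (1 - p) * (poly OA p * poly EB p - poly EA p * poly OB p) * s)"
      by (simp add: g1_def g3_def Q_def X_def poly_power algebra_simps)
    also have "\<dots> = (1 - p) ^ nB * ((1 - p) * ((poly EA p + s * poly OA p) * (poly EB p - s * poly OB p)))"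
      by (simp add: times_sqrt_conjugate[OF ss])
    finally show "poly g1 p * s + poly g3 p
        = (1 - p) ^ Suc nB * ((1 - p) ^ nA * poly A s) * ((1 - p) ^ nB * poly B (- s))"
      by (simp add: AB)
  qed
  obtain p0 where p0: "p0 \<in> {0<..<1}"
    "poly B (sqrt (p0 / (1 - p0))) \<noteq> 0" "poly B (- sqrt (p0 / (1 - p0))) \<noteq> 0"
    using ex_sqrt_odds_avoiding[OF poly_roots_finite[OF assms]] by auto
  then have "G \<noteq> 0"
    using conj[OF p0(1) refl] by auto
  moreover have "poly B s \<noteq> 0 \<and> poly A s / poly B s = poly g1 p / poly G p * s + poly g3 p / poly G p"
    if "p \<in> {0<..<1}" "poly G p \<noteq> 0" and s: "s = sqrt (p / (1 - p))" for p s
  proof -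
    define K where "K = (1 - p) ^ Suc (nA + nB + nB) * poly B (- s)"
    have "poly G p = K * poly B s" "poly g1 p * s + poly g3 p = K * poly A s"
      unfolding conj[OF that(1) s] num[OF that(1) s] K_def by (simp_all add: power_add ac_simps)
    moreover have "K \<noteq> 0"
      using that(2) calculation(1) by auto
    moreover have "poly g1 p / poly G p * s + poly g3 p / poly G p = (poly g1 p * s + poly g3 p) / poly G p"
      by (simp add: add_divide_distrib)
    ultimately show ?thesis
      using that(2) by simp
  qed
  ultimately show ?thesis
    by blast
qed

lemma poly_map_poly_Re: "poly (map_poly Re P) x = Re (poly P (complex_of_real x))"
proof (induction P)
  case (pCons a P)
  then show ?case
    by (simp add: map_poly_pCons)
qed simp

lemma real_polys_of_complex_ratio:
  fixes P0 P1 :: "complex poly"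
  shows "\<exists>A B. (\<forall>x. poly B x = (cmod (poly P1 (complex_of_real x)))\<^sup>2) \<and>
    (\<forall>x r. poly P0 (complex_of_real x) = poly P1 (complex_of_real x) * complex_of_real r \<longrightarrow>
      poly A x = r * poly B x)"
proof (intro exI conjI allI impI)
  fix x r
  assume "poly P0 (complex_of_real x) = poly P1 (complex_of_real x) * complex_of_real r"
  then have "poly P0 (complex_of_real x) * cnj (poly P1 (complex_of_real x))
      = complex_of_real r * (poly P1 (complex_of_real x) * cnj (poly P1 (complex_of_real x)))"
    by (simp add: mult_ac)
  then show "poly (map_poly Re (P0 * map_poly cnj P1)) x = r * poly (map_poly Re (P1 * map_poly cnj P1)) x"
    by (simp add: poly_map_poly_Re complex_mult_cnj)
qed (simp add: poly_map_poly_Re complex_mult_cnj cmod_power2)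

lemma amplitude_ratio:
  fixes Y c u w :: complex and a b :: real
  assumes "Y \<noteq> 0" "b \<noteq> 0"
    and "Y * u = c * complex_of_real a" "Y * w = c * complex_of_real b"
  shows "u = w * complex_of_real (a / b)"
proof -
  have "Y * (u * complex_of_real b) = Y * (w * complex_of_real a)"
    by (simp only: mult.assoc[symmetric] assms(3,4)) (simp add: ac_simps)
  then have "u * complex_of_real b = w * complex_of_real a"
    using assms(1) by simp
  then show ?thesis
    using assms(2) by (simp add: eq_divide_eq)
qed

lemma simulable_sqrt_amplitudes_poly_ratio:
  fixes f :: "real \<Rightarrow> real"
  assumes f_ne_1: "\<forall>p\<in>{0<..<1}. f p \<noteq> 1"
    and "simulable (\<lambda>p. complex_of_real (sqrt (f p))) (\<lambda>p. complex_of_real (sqrt (1 - f p)))"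
  shows "\<exists>P0 P1. P1 \<noteq> 0 \<and> (\<forall>p\<in>{0<..<1}. poly P1 (complex_of_real (sqrt (p / (1 - p)))) \<noteq> 0 \<longrightarrow>
    poly P0 (complex_of_real (sqrt (p / (1 - p))))
      = poly P1 (complex_of_real (sqrt (p / (1 - p)))) * complex_of_real (sqrt (f p / (1 - f p))))"
proof -
  from assms(2) obtain \<psi> where "reachable 1 \<psi>"
    and proportional: "\<forall>p\<in>{0<..<1}. (\<psi> p 0 \<noteq> 0 \<or> \<psi> p 1 \<noteq> 0) \<longrightarrow>
      (\<exists>c. c \<noteq> 0 \<and> \<psi> p 0 = c * complex_of_real (sqrt (f p))
        \<and> \<psi> p 1 = c * complex_of_real (sqrt (1 - f p)))"
    unfolding simulable_def by blast
  obtain N P i where amp: "poly_amplitudes N P \<psi>" and "i < 2" "P i \<noteq> 0"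
    using reachable_poly_amplitudes[OF \<open>reachable 1 \<psi>\<close>] by auto
  then have P01: "P 0 \<noteq> 0 \<or> P 1 \<noteq> 0"
    by (auto simp: less_2_cases_iff)
  define z where "z p = complex_of_real (sqrt (p / (1 - p)))" for p
  define Y where "Y p = complex_of_real (sqrt (1 - p) ^ N)" for p
  have \<psi>: "\<psi> p i = Y p * poly (P i) (z p)" and Y_nonzero: "Y p \<noteq> 0" if "p \<in> {0<..<1}" for p i
    using amp that by (auto simp: poly_amplitudes_def z_def Y_def)
  have ratio: "poly (P 0) (z p) = poly (P 1) (z p) * complex_of_real (sqrt (f p / (1 - f p)))"
    if p: "p \<in> {0<..<1}" and "\<psi> p 0 \<noteq> 0 \<or> \<psi> p 1 \<noteq> 0" for p
  proof -
    have "\<exists>c. c \<noteq> 0 \<and> \<psi> p 0 = c * complex_of_real (sqrt (f p))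
        \<and> \<psi> p 1 = c * complex_of_real (sqrt (1 - f p))"
      using proportional that by blast
    then obtain c where "\<psi> p 0 = c * complex_of_real (sqrt (f p))"
      "\<psi> p 1 = c * complex_of_real (sqrt (1 - f p))"
      by blast
    moreover have "sqrt (1 - f p) \<noteq> 0"
      using f_ne_1 p by simp
    ultimately show ?thesis
      using amplitude_ratio \<psi>[OF p] Y_nonzero[OF p] by (simp add: real_sqrt_divide)
  qed
  have "P 1 \<noteq> 0"
  proof
    assume "P 1 = 0"
    with P01 have "P 0 \<noteq> 0"
      by simp
    then obtain p where p: "p \<in> {0<..<1}" and u: "poly (P 0) (z p) \<noteq> 0"
      using ex_sqrt_odds_poly_nonzero unfolding z_def by blast
    then have "\<psi> p 0 \<noteq> 0"
      using \<psi>[OF p] Y_nonzero[OF p] by simp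
    then have "poly (P 0) (z p) = 0"
      using ratio[OF p] \<open>P 1 = 0\<close> by simp
    with u show False ..
  qed
  moreover have "poly (P 0) (z p) = poly (P 1) (z p) * complex_of_real (sqrt (f p / (1 - f p)))"
    if "p \<in> {0<..<1}" "poly (P 1) (z p) \<noteq> 0" for p
    using that ratio \<psi> Y_nonzero by simp
  ultimately show ?thesis
    unfolding z_def by blast
qed

lemma rational_in_sqrt_odds_if_simulable:
  fixes f :: "real \<Rightarrow> real"
  assumes "\<forall>p\<in>{0<..<1}. f p \<noteq> 1"
    and "simulable (\<lambda>p. complex_of_real (sqrt (f p))) (\<lambda>p. complex_of_real (sqrt (1 - f p)))"
  shows "\<exists>A B. B \<noteq> 0 \<and> (\<forall>p\<in>{0<..<1}. poly B (sqrt (p / (1 - p))) \<noteq> 0 \<longrightarrow>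
    sqrt (f p / (1 - f p)) = poly A (sqrt (p / (1 - p))) / poly B (sqrt (p / (1 - p))))"
proof -
  obtain P0 P1 where "P1 \<noteq> 0" and ratio: "\<forall>p\<in>{0<..<1}. poly P1 (complex_of_real (sqrt (p / (1 - p)))) \<noteq> 0 \<longrightarrow>
      poly P0 (complex_of_real (sqrt (p / (1 - p))))
        = poly P1 (complex_of_real (sqrt (p / (1 - p)))) * complex_of_real (sqrt (f p / (1 - f p)))"
    using simulable_sqrt_amplitudes_poly_ratio[OF assms] by blast
  obtain A B where B: "\<And>x. poly B x = (cmod (poly P1 (complex_of_real x)))\<^sup>2"
    and AB: "\<And>x r. poly P0 (complex_of_real x) = poly P1 (complex_of_real x) * complex_of_real r \<Longrightarrow>
      poly A x = r * poly B x"
    using real_polys_of_complex_ratio[of P1 P0] by blast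
  obtain p1 where "p1 \<in> {0<..<1}" "poly P1 (complex_of_real (sqrt (p1 / (1 - p1)))) \<noteq> 0"
    using ex_sqrt_odds_poly_nonzero[OF \<open>P1 \<noteq> 0\<close>] by blast
  then have "B \<noteq> 0"
    using B[of "sqrt (p1 / (1 - p1))"] by auto
  moreover have "sqrt (f p / (1 - f p)) = poly A (sqrt (p / (1 - p))) / poly B (sqrt (p / (1 - p)))"
    if "p \<in> {0<..<1}" and "poly B (sqrt (p / (1 - p))) \<noteq> 0" for p
    using that ratio AB B by simp
  ultimately show ?thesis
    by blast
qed

theorem mainTheorem2:
  fixes f :: "real \<Rightarrow> real"
  assumes "\<forall>p\<in>{0..1}. 0 \<le> f p \<and> f p \<le> 1"
      and "\<forall>p\<in>{0<..<1}. f p \<noteq> 1"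
  shows "simulable (\<lambda>p. complex_of_real (sqrt (f p))) (\<lambda>p. complex_of_real (sqrt (1 - f p)))
    \<longleftrightarrow> (\<exists>g1 g2 g3 g4 :: real poly. g2 \<noteq> 0 \<and> g4 \<noteq> 0 \<and>
          (\<forall>p\<in>{0<..<1}. poly g2 p \<noteq> 0 \<and> poly g4 p \<noteq> 0 \<longrightarrow>
             sqrt (f p / (1 - f p)) =
               poly g1 p / poly g2 p * sqrt (p / (1 - p)) + poly g3 p / poly g4 p))"
    (is "?simulable \<longleftrightarrow> ?rational")
proof
  assume ?simulable
  then obtain A B where "B \<noteq> 0" and AB: "\<forall>p\<in>{0<..<1}. poly B (sqrt (p / (1 - p))) \<noteq> 0 \<longrightarrow>
      sqrt (f p / (1 - f p)) = poly A (sqrt (p / (1 - p))) / poly B (sqrt (p / (1 - p)))"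
    using rational_in_sqrt_odds_if_simulable assms(2) by blast
  then obtain g1 g3 G where "G \<noteq> 0" and "\<forall>p\<in>{0<..<1}. poly G p \<noteq> 0 \<longrightarrow>
      poly B (sqrt (p / (1 - p))) \<noteq> 0 \<and> poly A (sqrt (p / (1 - p))) / poly B (sqrt (p / (1 - p)))
        = poly g1 p / poly G p * sqrt (p / (1 - p)) + poly g3 p / poly G p"
    using sqrt_odds_ratio_rationalise by blast
  with AB show ?rational
    by (intro exI[of _ g1] exI[of _ G] exI[of _ g3]) auto
next
  assume ?rational
  moreover have "\<forall>p\<in>{0<..<1}. 0 \<le> f p \<and> f p < 1"
    using assms by (auto simp: order.order_iff_strict)
  ultimately show ?simulable
    using simulable_if_rational_in_sqrt_odds by blast
qed

end
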